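(* Let $G=(V,E)$ be a graph, $d=(d(v):v\in V)$ an integer sequence, and $\mathcal{C}\in\mathcal{K}(d)$, and let $e\in E$. If $(G,\mathcal{C})$ has a CAW through $e$, then for every $\mathcal{C}'\in\mathcal{K}(d)$, $(G,\mathcal{C}')$ has a CAW through $e$.
   Context: Graphs are finite, undirected, may have parallel edges but no loops. $\mathcal{K}(d)$ is the set of all colorings $\mathcal{C}:E\to\{R,B\}$ (red/blue) such that the number of red edges incident with $v$ equals $d(v)$ for every $v\in V$. A walk $(v_0,e_1,v_1,\dots,e_m,v_m)$ is a closed alternating walk (CAW) if $v_0=v_m$, $\mathcal{C}(e_j)\ne\mathcal{C}(e_{j+1})$ for $j=1,\dots,m-1$, and $\mathcal{C}(e_m)\ne\mathcal{C}(e_1)$. A CAW is through $e$ if $e$ is one of its edges $e_j$. *)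

theory Defs
  imports Main
begin

text \<open>A finite multigraph without loops: vertex set V, edge set E, and an endpoint
map ends assigning to each edge a set of exactly two distinct vertices of V
(parallel edges = distinct edges with the same endpoints).\<close>
definition multigraph :: "'v set \<Rightarrow> 'e set \<Rightarrow> ('e \<Rightarrow> 'v set) \<Rightarrow> bool" where
  "multigraph V E ends \<longleftrightarrow> finite V \<and> finite E \<and>
     (\<forall>e\<in>E. ends e \<subseteq> V \<and> card (ends e) = 2)"

text \<open>Red/blue colourings E -> {R,B} (values off E are irrelevant).\<close>
datatype colour = R | B

definition K :: "'v set \<Rightarrow> 'e set \<Rightarrow> ('e \<Rightarrow> 'v set) \<Rightarrow> ('v \<Rightarrow> int) \<Rightarrow> ('e \<Rightarrow> colour) set" where
  "K V E ends d = {C. \<forall>v\<in>V. int (card {e\<in>E. v \<in> ends e \<and> C e = R}) = d v}"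

text \<open>A walk (v_0,e_1,v_1,...,e_m,v_m) given by vertex list vs (length m+1) and edge list
es (length m); es ! j is the edge e_{j+1} joining vs ! j and vs ! (j+1).\<close>
definition is_walk :: "'e set \<Rightarrow> ('e \<Rightarrow> 'v set) \<Rightarrow> 'v list \<Rightarrow> 'e list \<Rightarrow> bool" where
  "is_walk E ends vs es \<longleftrightarrow> length vs = length es + 1 \<and>
     (\<forall>j < length es. es ! j \<in> E \<and> ends (es ! j) = {vs ! j, vs ! Suc j})"

definition is_CAW :: "'e set \<Rightarrow> ('e \<Rightarrow> 'v set) \<Rightarrow> ('e \<Rightarrow> colour) \<Rightarrow> 'v list \<Rightarrow> 'e list \<Rightarrow> bool" where
  "is_CAW E ends C vs es \<longleftrightarrow> is_walk E ends vs es \<and> es \<noteq> [] \<and>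
     hd vs = last vs \<and>
     (\<forall>j. Suc j < length es \<longrightarrow> C (es ! j) \<noteq> C (es ! Suc j)) \<and>
     C (last es) \<noteq> C (hd es)"

definition has_CAW_through :: "'e set \<Rightarrow> ('e \<Rightarrow> 'v set) \<Rightarrow> ('e \<Rightarrow> colour) \<Rightarrow> 'e \<Rightarrow> bool" where
  "has_CAW_through E ends C e \<longleftrightarrow> (\<exists>vs es. is_CAW E ends C vs es \<and> e \<in> set es)"

end

theory Submission
  imports Defs
begin

text \<open>Alternating walks are the walks of the state graph whose states are pairs (w, c), read
as "standing at w, the next edge must have colour c"; an edge f = uv of colour c yields the
two arcs (u, c) \<rightarrow> (v, c') and (v, c) \<rightarrow> (u, c'), where c' is the other colour. A CAW through
e = uv exists iff the head of an arc of e reaches its tail. For a set S of states let the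
flux of an edge be the number of its arcs entering S minus the number leaving S. Summed over
all edges, the flux only depends on the in- and out-degrees of the states, which are
determined by d; hence it is the same for all colourings in K(d). If S is closed under the
arcs of C', every edge has nonnegative C'-flux, and recolouring an edge negates its flux, so
the edges where C and C' differ have flux zero and S is closed under the arcs of C as well.
Taking for S the states C'-reachable from the head of an arc of e then finishes the proof.\<close>

fun opposite :: "colour \<Rightarrow> colour" where
  "opposite R = B"
| "opposite B = R"

lemma opposite_neq [simp]: "opposite c \<noteq> c" "c \<noteq> opposite c"
  by (cases c; simp)+

lemma opposite_opposite [simp]: "opposite (opposite c) = c"
  by (cases c) auto

lemma colour_neq_iff: "c \<noteq> c' \<longleftrightarrow> c' = opposite c"
  by (cases c; cases c') auto

definition alt_step ::
  "'e set \<Rightarrow> ('e \<Rightarrow> 'v set) \<Rightarrow> ('e \<Rightarrow> colour) \<Rightarrow> 'v \<times> colour \<Rightarrow> 'v \<times> colour \<Rightarrow> bool" where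
  "alt_step E ends C x y \<longleftrightarrow>
     (\<exists>f\<in>E. \<exists>u v. ends f = {u, v} \<and> x = (u, C f) \<and> y = (v, opposite (C f)))"

lemma alt_stepI: "f \<in> E \<Longrightarrow> ends f = {u, v} \<Longrightarrow> alt_step E ends C (u, C f) (v, opposite (C f))"
  unfolding alt_step_def by blast

definition alt_walk :: "'e set \<Rightarrow> ('e \<Rightarrow> 'v set) \<Rightarrow> ('e \<Rightarrow> colour) \<Rightarrow> 'v list \<Rightarrow> 'e list \<Rightarrow> bool" where
  "alt_walk E ends C vs es \<longleftrightarrow> is_walk E ends vs es \<and>
     (\<forall>j. Suc j < length es \<longrightarrow> C (es ! j) \<noteq> C (es ! Suc j))"

lemma is_CAW_iff_alt_walk:
  "is_CAW E ends C vs es \<longleftrightarrow>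
     alt_walk E ends C vs es \<and> es \<noteq> [] \<and> hd vs = last vs \<and> C (last es) \<noteq> C (hd es)"
  unfolding is_CAW_def alt_walk_def by auto

lemma alt_walk_Cons:
  assumes walk: "alt_walk E ends C vs es" and f: "f \<in> E" "ends f = {u, hd vs}"
    and alternates: "es \<noteq> [] \<Longrightarrow> C f \<noteq> C (hd es)"
  shows "alt_walk E ends C (u # vs) (f # es)"
proof -
  have "length vs = length es + 1"
    using walk unfolding alt_walk_def is_walk_def by simp
  then have "hd vs = vs ! 0"
    by (cases vs) auto
  then show ?thesis
    using walk f alternates unfolding alt_walk_def is_walk_def
    by (auto simp: nth_Cons hd_conv_nth split: nat.splits)
qed

lemma tranclp_alt_step_imp_alt_walk:
  assumes "(alt_step E ends C)\<^sup>+\<^sup>+ x y"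
  shows "\<exists>vs es. alt_walk E ends C vs es \<and> es \<noteq> [] \<and>
           x = (hd vs, C (hd es)) \<and> y = (last vs, opposite (C (last es)))"
  using assms
proof (induction rule: converse_tranclp_induct)
  case (base x)
  then obtain f u v where "f \<in> E" "ends f = {u, v}" "x = (u, C f)" "y = (v, opposite (C f))"
    unfolding alt_step_def by blast
  moreover have "alt_walk E ends C [v] []"
    unfolding alt_walk_def is_walk_def by simp
  ultimately have "alt_walk E ends C [u, v] [f]"
    using alt_walk_Cons[of E ends C "[v]" "[]" f u] by simp
  with \<open>x = (u, C f)\<close> \<open>y = (v, opposite (C f))\<close> show ?case
    by fastforce
next
  case (step x z)
  obtain vs es where walk: "alt_walk E ends C vs es" "es \<noteq> []"
    and z: "z = (hd vs, C (hd es))" and y: "y = (last vs, opposite (C (last es)))"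
    using step.IH by blast
  obtain f u where f: "f \<in> E" "ends f = {u, hd vs}" "x = (u, C f)"
    and "C (hd es) = opposite (C f)"
    using step.hyps(1) z unfolding alt_step_def by auto
  then have "alt_walk E ends C (u # vs) (f # es)"
    using walk by (intro alt_walk_Cons) auto
  moreover have "vs \<noteq> []"
    using walk unfolding alt_walk_def is_walk_def by auto
  ultimately show ?case
    using f(3) y walk(2) by (intro exI[of _ "u # vs"] exI[of _ "f # es"]) auto
qed

lemma rtranclp_alt_step_imp_has_CAW_through:
  assumes e: "e \<in> E" "ends e = {u, v}"
    and reach: "(alt_step E ends C)\<^sup>*\<^sup>* (v, opposite (C e)) (u, C e)"
  shows "has_CAW_through E ends C e"
proof -
  have "(alt_step E ends C)\<^sup>+\<^sup>+ (v, opposite (C e)) (u, C e)"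
    using rtranclpD[OF reach] by auto
  then obtain vs es where walk: "alt_walk E ends C vs es" "es \<noteq> []"
    and start: "(v, opposite (C e)) = (hd vs, C (hd es))"
    and stop: "(u, C e) = (last vs, opposite (C (last es)))"
    using tranclp_alt_step_imp_alt_walk by blast
  then have "v = hd vs" "C (hd es) = opposite (C e)" "u = last vs" "C (last es) = opposite (C e)"
    by auto
  moreover have "vs \<noteq> []"
    using walk unfolding alt_walk_def is_walk_def by auto
  moreover have "alt_walk E ends C (u # vs) (e # es)"
    using walk e \<open>v = hd vs\<close> \<open>C (hd es) = opposite (C e)\<close> by (intro alt_walk_Cons) auto
  ultimately have "is_CAW E ends C (u # vs) (e # es)"
    using walk(2) unfolding is_CAW_iff_alt_walk by auto
  then show ?thesis
    unfolding has_CAW_through_def by force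
qed

lemma rtranclp_cycle:
  assumes step: "\<And>j. j < m \<Longrightarrow> r (f j) (f (Suc j mod m))" and "i < m" "j < m"
  shows "r\<^sup>*\<^sup>* (f i) (f j)"
proof -
  have "r\<^sup>*\<^sup>* (f i) (f ((i + n) mod m))" for n
  proof (induction n)
    case 0
    show ?case using \<open>i < m\<close> by simp
  next
    case (Suc n)
    have "r (f ((i + n) mod m)) (f (Suc (i + n) mod m))"
      using step[of "(i + n) mod m"] \<open>i < m\<close> by (simp add: mod_Suc_eq)
    with Suc.IH show ?case
      by simp
  qed
  from this[of "m - i + j"] show ?thesis
    using assms(2,3) by simp
qed

lemma is_CAW_imp_rtranclp_alt_step:
  assumes caw: "is_CAW E ends C vs es" and k: "k < length es"
  shows "(alt_step E ends C)\<^sup>*\<^sup>* (vs ! Suc k, opposite (C (es ! k))) (vs ! k, C (es ! k))"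
proof -
  define m where "m = length es"
  define s where "s j = (vs ! j, C (es ! j))" for j
  have walk: "is_walk E ends vs es"
    and alternates: "\<And>j. Suc j < m \<Longrightarrow> C (es ! j) \<noteq> C (es ! Suc j)"
    and "m > 0" and "length vs = m + 1" and "hd vs = last vs"
    and wraps: "C (es ! (m - 1)) \<noteq> C (es ! 0)"
    using caw unfolding is_CAW_iff_alt_walk alt_walk_def is_walk_def m_def
    by (auto simp: hd_conv_nth last_conv_nth)
  then have closed: "vs ! m = vs ! 0"
    by (cases vs) (auto simp: hd_conv_nth last_conv_nth)
  have next_state: "(vs ! Suc j, opposite (C (es ! j))) = s (Suc j mod m)" if "j < m" for j
  proof (cases "Suc j < m")
    case True
    then show ?thesis
      using alternates[OF True] unfolding s_def by (simp add: colour_neq_iff)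
  next
    case False
    then have "Suc j = m"
      using that by simp
    then show ?thesis
      using closed wraps unfolding s_def by (auto simp: colour_neq_iff)
  qed
  have "alt_step E ends C (s j) (s (Suc j mod m))" if "j < m" for j
    using walk that next_state[OF that] unfolding s_def is_walk_def m_def
    by (metis alt_stepI)
  then have "(alt_step E ends C)\<^sup>*\<^sup>* (s (Suc k mod m)) (s k)"
    by (rule rtranclp_cycle[where f = s]) (use k m_def \<open>m > 0\<close> in auto)
  then show ?thesis
    using next_state k unfolding m_def s_def by simp
qed

lemma has_CAW_through_imp_rtranclp_alt_step:
  assumes "has_CAW_through E ends C e"
  obtains u v where "ends e = {u, v}"
    and "(alt_step E ends C)\<^sup>*\<^sup>* (v, opposite (C e)) (u, C e)"
proof -
  obtain vs es k where caw: "is_CAW E ends C vs es" and k: "k < length es" "es ! k = e"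
    using assms unfolding has_CAW_through_def by (auto simp: in_set_conv_nth)
  then have "ends e = {vs ! k, vs ! Suc k}"
    unfolding is_CAW_def is_walk_def by auto
  with is_CAW_imp_rtranclp_alt_step[OF caw k(1)] k(2) show ?thesis
    using that by simp
qed

definition colour_sign :: "colour \<Rightarrow> int" where
  "colour_sign c = (if c = R then 1 else -1)"

definition balance :: "('v \<times> colour) set \<Rightarrow> 'v \<Rightarrow> int" where
  "balance S w = of_bool ((w, B) \<in> S) - of_bool ((w, R) \<in> S)"

text \<open>The number of arcs of f entering S minus the number leaving S (see flux_arcs), written
as a product so that its sum over all edges can be computed vertex by vertex.\<close>

definition flux :: "('v \<times> colour) set \<Rightarrow> ('e \<Rightarrow> colour) \<Rightarrow> ('e \<Rightarrow> 'v set) \<Rightarrow> 'e \<Rightarrow> int" where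
  "flux S C ends f = colour_sign (C f) * (\<Sum>w\<in>ends f. balance S w)"

lemma sum_colour_sign_incident:
  assumes "finite E" "w \<in> V" "C \<in> K V E ends d"
  shows "(\<Sum>f\<in>{f\<in>E. w \<in> ends f}. colour_sign (C f)) = 2 * d w - int (card {f\<in>E. w \<in> ends f})"
proof -
  let ?A = "{f\<in>E. w \<in> ends f}"
  have "int (card (?A \<inter> {f. C f = R})) = d w"
    using assms(2,3) unfolding K_def by (simp add: Int_def)
  moreover have "colour_sign (C f) = 2 * of_bool (C f = R) - 1" for f
    unfolding colour_sign_def by simp
  ultimately show ?thesis
    using assms(1) by (simp add: sum_subtractf sum_distrib_left[symmetric])
qed

lemma sum_edges_swap:
  assumes "finite E" "finite V" "\<forall>f\<in>E. ends f \<subseteq> V"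
  shows "(\<Sum>f\<in>E. \<Sum>w\<in>ends f. h f w) = (\<Sum>w\<in>V. \<Sum>f\<in>{f\<in>E. w \<in> ends f}. h f w)"
proof -
  have "(\<Sum>f\<in>E. \<Sum>w\<in>ends f. h f w) = (\<Sum>f\<in>E. \<Sum>w\<in>{w\<in>V. w \<in> ends f}. h f w)"
    using assms(3) by (intro sum.cong) (auto intro: arg_cong[of _ _ "sum _"])
  also have "\<dots> = (\<Sum>w\<in>V. \<Sum>f\<in>{f\<in>E. w \<in> ends f}. h f w)"
    using sum.swap_restrict[OF assms(1,2)] by simp
  finally show ?thesis .
qed

lemma sum_flux:
  assumes "multigraph V E ends" "C \<in> K V E ends d"
  shows "(\<Sum>f\<in>E. flux S C ends f) =
           (\<Sum>w\<in>V. balance S w * (2 * d w - int (card {f\<in>E. w \<in> ends f})))"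
proof -
  have fin: "finite E" "finite V" "\<forall>f\<in>E. ends f \<subseteq> V"
    using assms(1) unfolding multigraph_def by auto
  have "(\<Sum>f\<in>E. flux S C ends f) = (\<Sum>f\<in>E. \<Sum>w\<in>ends f. balance S w * colour_sign (C f))"
    unfolding flux_def by (simp add: sum_distrib_left mult.commute)
  also have "\<dots> = (\<Sum>w\<in>V. \<Sum>f\<in>{f\<in>E. w \<in> ends f}. balance S w * colour_sign (C f))"
    by (rule sum_edges_swap[OF fin])
  also have "\<dots> = (\<Sum>w\<in>V. balance S w * (2 * d w - int (card {f\<in>E. w \<in> ends f})))"
    using sum_colour_sign_incident[OF fin(1) _ assms(2)]
    by (intro sum.cong) (simp_all add: sum_distrib_left[symmetric])
  finally show ?thesis .
qed

lemma flux_arcs: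
  assumes "ends f = {x, y}" "x \<noteq> y"
  shows "flux S C ends f =
           (of_bool ((y, opposite (C f)) \<in> S) - of_bool ((x, C f) \<in> S)) +
           (of_bool ((x, opposite (C f)) \<in> S) - of_bool ((y, C f) \<in> S))"
  using assms unfolding flux_def balance_def colour_sign_def by (cases "C f") auto

lemma flux_recolour:
  "flux S C ends f = (if C f = C' f then flux S C' ends f else - flux S C' ends f)"
  unfolding flux_def colour_sign_def by (cases "C f"; cases "C' f") auto

definition alt_closed :: "'e set \<Rightarrow> ('e \<Rightarrow> 'v set) \<Rightarrow> ('e \<Rightarrow> colour) \<Rightarrow> ('v \<times> colour) set \<Rightarrow> bool" where
  "alt_closed E ends C S \<longleftrightarrow> (\<forall>x y. x \<in> S \<longrightarrow> alt_step E ends C x y \<longrightarrow> y \<in> S)"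

lemma alt_closed_rtranclp:
  "(alt_step E ends C)\<^sup>*\<^sup>* x y \<Longrightarrow> alt_closed E ends C S \<Longrightarrow> x \<in> S \<Longrightarrow> y \<in> S"
  unfolding alt_closed_def by (induction rule: rtranclp_induct) auto

lemma alt_closed_arc:
  assumes "alt_closed E ends C S" "f \<in> E" "ends f = {x, y}"
  shows "of_bool ((x, C f) \<in> S) \<le> (of_bool ((y, opposite (C f)) \<in> S) :: int)"
  using assms alt_stepI[of f E ends x y C] unfolding alt_closed_def by auto

lemma flux_nonneg:
  assumes closed: "alt_closed E ends C S" and "multigraph V E ends" "f \<in> E"
  shows "flux S C ends f \<ge> 0"
proof -
  obtain x y where xy: "ends f = {x, y}" "x \<noteq> y"
    using assms(2,3) unfolding multigraph_def by (auto simp: card_2_iff)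
  moreover have "ends f = {y, x}"
    using xy(1) by (simp add: insert_commute)
  ultimately show ?thesis
    using flux_arcs[of ends f x y S C] alt_closed_arc[OF closed \<open>f \<in> E\<close>] by fastforce
qed

lemma zero_flux_reverse_arc:
  assumes closed: "alt_closed E ends C S" and f: "f \<in> E" "ends f = {x, y}" "x \<noteq> y"
    and zero: "flux S C ends f = 0" and "(x, opposite (C f)) \<in> S"
  shows "(y, C f) \<in> S"
proof -
  have "ends f = {y, x}"
    using f(2) by (simp add: insert_commute)
  then have "of_bool ((y, C f) \<in> S) \<le> (of_bool ((x, opposite (C f)) \<in> S) :: int)"
    using alt_closed_arc[OF closed f(1)] by blast
  with flux_arcs[of ends f x y S C, OF f(2,3)] zero alt_closed_arc[OF closed f(1,2)]
  have "of_bool ((y, C f) \<in> S) = (of_bool ((x, opposite (C f)) \<in> S) :: int)"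
    by linarith
  then show ?thesis
    using \<open>(x, opposite (C f)) \<in> S\<close> by simp
qed

lemma alt_closed_transfer:
  assumes G: "multigraph V E ends" and "C \<in> K V E ends d" "C' \<in> K V E ends d"
    and closed: "alt_closed E ends C' S"
  shows "alt_closed E ends C S"
  unfolding alt_closed_def
proof (intro allI impI)
  fix x y
  assume "x \<in> S" "alt_step E ends C x y"
  then obtain f u v where f: "f \<in> E" "ends f = {u, v}" and xy: "x = (u, C f)" "y = (v, opposite (C f))"
    unfolding alt_step_def by blast
  show "y \<in> S"
  proof (cases "C f = C' f")
    case True
    then show ?thesis
      using closed \<open>x \<in> S\<close> alt_stepI[of f E ends u v C'] f xy unfolding alt_closed_def by simp
  next
    case False
    have fin: "finite E"
      using G unfolding multigraph_def by simp
    have "(\<Sum>g\<in>E. flux S C' ends g - flux S C ends g) = 0"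
      using sum_flux[OF G assms(2)] sum_flux[OF G assms(3)] by (simp add: sum_subtractf)
    moreover have "flux S C' ends g - flux S C ends g =
        (if C g = C' g then 0 else 2 * flux S C' ends g)" for g
      using flux_recolour[of S C ends g C'] by auto
    ultimately have "\<forall>g\<in>E. (if C g = C' g then 0 else 2 * flux S C' ends g) = 0"
      using fin flux_nonneg[OF closed G] by (subst sum_nonneg_eq_0_iff[symmetric]) auto
    then have "flux S C' ends f = 0"
      using f False by auto
    moreover have "u \<noteq> v"
      using G f unfolding multigraph_def by auto
    ultimately show ?thesis
      using zero_flux_reverse_arc[OF closed f] \<open>x \<in> S\<close> xy False
      by (simp add: colour_neq_iff)
  qed
qed

theorem lemma2p5:
  fixes V :: "'v set" and E :: "'e set" and ends :: "'e \<Rightarrow> 'v set"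
    and d :: "'v \<Rightarrow> int" and C C' :: "'e \<Rightarrow> colour" and e :: 'e
  assumes "multigraph V E ends"
    and "C \<in> K V E ends d"
    and "e \<in> E"
    and "has_CAW_through E ends C e"
    and "C' \<in> K V E ends d"
  shows "has_CAW_through E ends C' e"
proof -
  obtain u v where ends: "ends e = {u, v}"
    and reach: "(alt_step E ends C)\<^sup>*\<^sup>* (v, opposite (C e)) (u, C e)"
    by (rule has_CAW_through_imp_rtranclp_alt_step[OF assms(4)])
  define S where "S = {z. (alt_step E ends C')\<^sup>*\<^sup>* (v, opposite (C' e)) z}"
  have "alt_closed E ends C' S"
    unfolding alt_closed_def S_def by (auto intro: rtranclp.rtrancl_into_rtrancl)
  then have closed: "alt_closed E ends C S"
    by (rule alt_closed_transfer[OF assms(1,2,5)])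
  have "(v, opposite (C' e)) \<in> S"
    unfolding S_def by simp
  moreover have "(alt_step E ends C)\<^sup>*\<^sup>* (v, opposite (C' e)) (u, C' e)"
  proof (cases "C e = C' e")
    case True
    then show ?thesis
      using reach by simp
  next
    case False
    then have "alt_step E ends C (v, opposite (C' e)) (u, C' e)"
      using alt_stepI[of e E ends v u C] assms(3) ends by (simp add: colour_neq_iff insert_commute)
    then show ?thesis
      by simp
  qed
  ultimately have "(u, C' e) \<in> S"
    using alt_closed_rtranclp closed by blast
  then show ?thesis
    using rtranclp_alt_step_imp_has_CAW_through[of e E ends u v C', OF assms(3) ends]
    unfolding S_def by simp
qed

end
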